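(* For all terms $s,t$ and $k\in\mathbb N$: $s\Downarrow_k t$ holds if and only if $s\succ^k t$ and $t$ is an abstraction.
   Context: Terms (de Bruijn): $s::=n\mid st\mid\lambda s$. Substitution $k^k_u=u$, $n^k_u=n$ ($n\ne k$), $(st)^k_u=(s^k_u)(t^k_u)$, $(\lambda s)^k_u=\lambda(s^{k+1}_u)$. Reduction: $(\lambda s)(\lambda t)\succ s^0_{\lambda t}$; $s\succ s'\Rightarrow st\succ s't$; $t\succ t'\Rightarrow(\lambda s)t\succ(\lambda s)t'$; $\succ^k$ is $k$-fold reduction. The big-step relation $s\Downarrow_k t$ is defined inductively by: $\lambda s\Downarrow_0\lambda s$; and if $s\Downarrow_{k_1}\lambda s'$, $t\Downarrow_{k_2}\lambda t'$ and $s'^0_{\lambda t'}\Downarrow_{k_3}u$, then $st\Downarrow_{k_1+k_2+1+k_3}u$. *)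

theory Defs
  imports Main
begin

datatype tm = Var nat | App "tm" "tm" | Lam "tm"

fun subst :: "tm \<Rightarrow> nat \<Rightarrow> tm \<Rightarrow> tm" where
  "subst (Var n) k u = (if n = k then u else Var n)"
| "subst (App s t) k u = App (subst s k u) (subst t k u)"
| "subst (Lam s) k u = Lam (subst s (Suc k) u)"

inductive step :: "tm \<Rightarrow> tm \<Rightarrow> bool" where
  stepBeta: "step (App (Lam s) (Lam t)) (subst s 0 (Lam t))"
| stepAppL: "step s s' \<Longrightarrow> step (App s t) (App s' t)"
| stepAppR: "step t t' \<Longrightarrow> step (App (Lam s) t) (App (Lam s) t')"

definition stepk :: "nat \<Rightarrow> tm \<Rightarrow> tm \<Rightarrow> bool" where
  "stepk k = step ^^ k"

inductive eval :: "tm \<Rightarrow> nat \<Rightarrow> tm \<Rightarrow> bool" where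
  evalLam: "eval (Lam s) 0 (Lam s)"
| evalApp: "eval s k1 (Lam s') \<Longrightarrow> eval t k2 (Lam t') \<Longrightarrow> eval (subst s' 0 (Lam t')) k3 u
            \<Longrightarrow> eval (App s t) (k1 + k2 + 1 + k3) u"

definition is_abs :: "tm \<Rightarrow> bool" where
  "is_abs t \<longleftrightarrow> (\<exists>s. t = Lam s)"

end

theory Submission
  imports Defs
begin

text \<open>A big-step derivation is flattened into a reduction sequence: reduce the operator to
  \<open>\<lambda>s'\<close> under \<open>stepAppL\<close>, then the operand to \<open>\<lambda>t'\<close> under \<open>stepAppR\<close>, fire the
  \<open>\<beta>\<close>-redex and continue with the body; the step counts add up as in \<open>evalApp\<close>.
  Conversely, big-step evaluation is closed under prepending one reduction step (at the cost
  of one more step), so induction on \<open>k\<close> from the trivial case \<open>\<lambda>s \<Down>\<^sub>0 \<lambda>s\<close> gives the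
  other direction.\<close>

lemma relpowp_map:
  assumes "\<And>x y. R x y \<Longrightarrow> S (f x) (f y)"
  shows "(R ^^ n) x y \<Longrightarrow> (S ^^ n) (f x) (f y)"
proof (induction n arbitrary: x)
  case 0
  then show ?case by simp
next
  case (Suc n)
  then obtain z where "R x z" "(R ^^ n) z y" by (blast elim: relpowp_Suc_E2)
  with Suc.IH show ?case by (blast intro: relpowp_Suc_I2 assms)
qed

lemma stepk_App_left: "stepk k s s' \<Longrightarrow> stepk k (App s t) (App s' t)"
  unfolding stepk_def by (rule relpowp_map[where f = "\<lambda>s. App s t"]) (rule stepAppL)

lemma stepk_App_right: "stepk k t t' \<Longrightarrow> stepk k (App (Lam s) t) (App (Lam s) t')"
  unfolding stepk_def by (rule relpowp_map[where f = "App (Lam s)"]) (rule stepAppR)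

lemma stepk_trans: "stepk m a b \<Longrightarrow> stepk n b c \<Longrightarrow> stepk (m + n) a c"
  unfolding stepk_def by (rule relpowp_trans)

lemma stepk_Suc_I2: "step a b \<Longrightarrow> stepk n b c \<Longrightarrow> stepk (Suc n) a c"
  unfolding stepk_def by (rule relpowp_Suc_I2)

lemma eval_imp_stepk: "eval s k t \<Longrightarrow> stepk k s t"
proof (induction rule: eval.induct)
  case (evalLam s)
  show ?case by (simp add: stepk_def)
next
  case (evalApp s k1 s' t k2 t' k3 u)
  have "stepk k1 (App s t) (App (Lam s') t)"
    using evalApp.IH(1) by (rule stepk_App_left)
  moreover have "stepk k2 (App (Lam s') t) (App (Lam s') (Lam t'))"
    using evalApp.IH(2) by (rule stepk_App_right)
  moreover have "stepk (Suc k3) (App (Lam s') (Lam t')) u"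
    using stepBeta evalApp.IH(3) by (rule stepk_Suc_I2)
  ultimately have "stepk (k1 + k2 + Suc k3) (App s t) u"
    by (blast intro: stepk_trans)
  then show ?case by simp
qed

lemma eval_is_abs: "eval s k t \<Longrightarrow> is_abs t"
  by (induction rule: eval.induct) (simp_all add: is_abs_def)

lemma eval_Suc_if_step: "step s s' \<Longrightarrow> eval s' k u \<Longrightarrow> eval s (Suc k) u"
proof (induction arbitrary: k u rule: step.induct)
  case (stepBeta s t')
  then show ?case using evalApp[OF evalLam evalLam, of s t' k] by simp
next
  case (stepAppL s s' t)
  from stepAppL.prems show ?case
  proof cases
    case (evalApp k1 s'' k2 t' k3)
    from stepAppL.IH[OF evalApp(2)] evalApp(3,4)
    have "eval (App s t) (Suc k1 + k2 + 1 + k3) u" by (rule eval.evalApp)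
    then show ?thesis using evalApp(1) by simp
  qed
next
  case (stepAppR t t' s)
  from stepAppR.prems show ?case
  proof cases
    case (evalApp k1 s'' k2 t'' k3)
    from evalApp(2) stepAppR.IH[OF evalApp(3)] evalApp(4)
    have "eval (App (Lam s) t) (k1 + Suc k2 + 1 + k3) u" by (rule eval.evalApp)
    then show ?thesis using evalApp(1) by simp
  qed
qed

lemma stepk_abs_imp_eval: "stepk k s t \<Longrightarrow> is_abs t \<Longrightarrow> eval s k t"
proof (induction k arbitrary: s)
  case 0
  then show ?case by (auto simp: stepk_def is_abs_def intro: evalLam)
next
  case (Suc k)
  from Suc.prems(1) obtain s' where "step s s'" "stepk k s' t"
    unfolding stepk_def by (rule relpowp_Suc_E2)
  with Suc show ?case by (blast intro: eval_Suc_if_step)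
qed

theorem lemmaA3:
  fixes s t :: "tm" and k :: nat
  shows "eval s k t \<longleftrightarrow> stepk k s t \<and> is_abs t"
  using eval_imp_stepk eval_is_abs stepk_abs_imp_eval by blast

end
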